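(* Let $\mathsf V$ and $\mathsf W$ be cyclically reduced linear words. The function $\mathsf s_{\mathsf V,\mathsf W}:I(\mathsf V,\mathsf W)\to\{1,-1,0\}$ is constant on each equivalence class of $\mathcal R(\mathsf V,\mathsf W)$.
   Context: Fix an alphabet $\mathbb A_q=\{a_1,\dots,a_q,\bar a_1,\dots,\bar a_q\}$ with a fixed linear order and $\bar{\bar v}=v$. A linear word $\mathsf V=v_0\cdots v_{n-1}$ is a non-empty finite sequence of letters; subscripts are read modulo the length. $\bar{\mathsf V}=\bar v_{n-1}\cdots\bar v_0$. $\mathsf V$ is cyclically reduced if $v_i\ne\bar v_{i+1}$ for all $i$ (indices mod $n$). $\mathsf V_j=v_jv_{j+1}\cdots v_{n-1}v_0\cdots v_{j-1}$. For cyclically reduced $\mathsf V=v_0\cdots v_{n-1}$, $\mathsf W=w_0\cdots w_{m-1}$, $I(\mathsf V,\mathsf W)=\{(j,k):0\le j<n,\,0\le k<m\}$ (entries mod $n$, mod $m$) and $\mathcal R(\mathsf V,\mathsf W)$ is the equivalence relation generated by $(j,k)\sim(j+1,k+1)$ whenever $v_j=w_k$, and $(j+1,k)\sim(j,k+1)$ whenever $v_j=\bar w_k$. For reduced half-infinite words $\mathsf T=t_0t_1\cdots$, $\mathsf U=u_0u_1\cdots$, $\mathsf T<\mathsf U$ if $t_0<u_0$, or if for some $j\ge0$, $t_i=u_i$ for $0\le i\le j$ and $t_{j+1}$ precedes $u_{j+1}$ in the order obtained by cyclically permuting the order of $\mathbb A_q$ so that $\bar t_j$ is first. $\mathsf V^{\infty}=\mathsf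 V\mathsf V\cdots$, $\mathsf V^{-\infty}=\bar{\mathsf V}\bar{\mathsf V}\cdots$ (so $\mathsf V_i^{\pm\infty}=(\mathsf V_i)^{\pm\infty}$). A 4-tuple of half-infinite words is cyclically ordered if some cyclic permutation of it is strictly increasing. $\mathsf s_{\mathsf V,\mathsf W}(i,j)=1$ if $(\mathsf V_i^\infty,\mathsf W_j^\infty,\mathsf V_i^{-\infty},\mathsf W_j^{-\infty})$ is cyclically ordered, $-1$ if $(\mathsf V_i^\infty,\mathsf W_j^{-\infty},\mathsf V_i^{-\infty},\mathsf W_j^{\infty})$ is cyclically ordered, and $0$ otherwise. *)

theory Defs
  imports Main
begin

text \<open>Letters: a_i is \<open>Ltr i False\<close>, the barred letter is \<open>Ltr i True\<close>.\<close>
datatype letter = Ltr nat bool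

fun bar :: "letter \<Rightarrow> letter" where
  "bar (Ltr i b) = Ltr i (\<not> b)"

definition alphabet :: "nat \<Rightarrow> letter set" where
  "alphabet q = {Ltr i b | i b. i < q}"

text \<open>The fixed linear order on the alphabet is given by an injective rank function
  \<open>rk\<close>: u precedes v iff rk u < rk v.\<close>

text \<open>u precedes v in the order obtained by cyclically permuting the order so that x is first.\<close>
definition cyc_prec :: "(letter \<Rightarrow> nat) \<Rightarrow> letter \<Rightarrow> letter \<Rightarrow> letter \<Rightarrow> bool" where
  "cyc_prec rk x u v \<longleftrightarrow>
     (rk x \<le> rk u \<and> rk v < rk x) \<or>
     ((rk x \<le> rk u \<longleftrightarrow> rk x \<le> rk v) \<and> rk u < rk v)"

definition word_less :: "(letter \<Rightarrow> nat) \<Rightarrow> (nat \<Rightarrow> letter) \<Rightarrow> (nat \<Rightarrow> letter) \<Rightarrow> bool" where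
  "word_less rk T U \<longleftrightarrow>
     rk (T 0) < rk (U 0) \<or>
     (\<exists>j. (\<forall>i\<le>j. T i = U i) \<and> cyc_prec rk (bar (T j)) (T (Suc j)) (U (Suc j)))"

definition cyc_ordered :: "(letter \<Rightarrow> nat) \<Rightarrow> (nat \<Rightarrow> letter) \<Rightarrow> (nat \<Rightarrow> letter) \<Rightarrow>
    (nat \<Rightarrow> letter) \<Rightarrow> (nat \<Rightarrow> letter) \<Rightarrow> bool" where
  "cyc_ordered rk a b c d \<longleftrightarrow>
     (word_less rk a b \<and> word_less rk b c \<and> word_less rk c d) \<or>
     (word_less rk b c \<and> word_less rk c d \<and> word_less rk d a) \<or>
     (word_less rk c d \<and> word_less rk d a \<and> word_less rk a b) \<or>
     (word_less rk d a \<and> word_less rk a b \<and> word_less rk b c)"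

definition cyc_reduced :: "letter list \<Rightarrow> bool" where
  "cyc_reduced V \<longleftrightarrow> (\<forall>i<length V. V ! i \<noteq> bar (V ! ((i + 1) mod length V)))"

text \<open>(V_i)^\<infinity> and (V_i)^{-\<infinity>}, with V_i the cyclic shift starting at position i.\<close>
definition pinf :: "letter list \<Rightarrow> nat \<Rightarrow> nat \<Rightarrow> letter" where
  "pinf V i k = V ! ((i + k) mod length V)"

definition ninf :: "letter list \<Rightarrow> nat \<Rightarrow> nat \<Rightarrow> letter" where
  "ninf V i k = bar (V ! nat ((int i - 1 - int k) mod int (length V)))"

definition sfun :: "(letter \<Rightarrow> nat) \<Rightarrow> letter list \<Rightarrow> letter list \<Rightarrow> nat \<Rightarrow> nat \<Rightarrow> int" where
  "sfun rk V W i j =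
     (if cyc_ordered rk (pinf V i) (pinf W j) (ninf V i) (ninf W j) then 1
      else if cyc_ordered rk (pinf V i) (ninf W j) (ninf V i) (pinf W j) then -1
      else 0)"

definition Iset :: "letter list \<Rightarrow> letter list \<Rightarrow> (nat \<times> nat) set" where
  "Iset V W = {(j, k). j < length V \<and> k < length W}"

definition Rgen :: "letter list \<Rightarrow> letter list \<Rightarrow> ((nat \<times> nat) \<times> (nat \<times> nat)) set" where
  "Rgen V W =
     {((j, k), ((j + 1) mod length V, (k + 1) mod length W)) | j k.
        j < length V \<and> k < length W \<and> V ! j = W ! k} \<union>
     {(((j + 1) mod length V, k), (j, (k + 1) mod length W)) | j k.
        j < length V \<and> k < length W \<and> V ! j = bar (W ! k)}"

definition Rrel :: "letter list \<Rightarrow> letter list \<Rightarrow> ((nat \<times> nat) \<times> (nat \<times> nat)) set" where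
  "Rrel V W = (Rgen V W \<union> (Rgen V W)\<inverse>)\<^sup>* \<inter> (Iset V W \<times> Iset V W)"

end

theory Submission
  imports Defs
begin

text \<open>
  The two ends of the periodic word (V_i)^(+-infinity) and those of W_j are four
  reduced half-infinite words, and s(i,j) only records how they are cyclically ordered.
  A generating pair of R(V,W) moves from one index pair to the other by reading the same
  letter a off all four ends simultaneously, i.e. by applying to each end the map
  "multiply on the left by the inverse of a and reduce" (called translate below).
  This map does not preserve the order on reduced words, but it changes it only by a
  rotation: the words lying before a certain cut move behind all the others, and within
  each side the order is kept.  A rotation of a linear order preserves every cyclic order,
  so s is unchanged along each generator, and hence along each R-chain.
\<close>

lemma bar_bar [simp]: "bar (bar x) = x"
  by (cases x) auto

lemma bar_eq_iff: "bar x = y \<longleftrightarrow> x = bar y"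
  by (cases x; cases y) auto

lemma bar_in_alphabet: "x \<in> alphabet q \<Longrightarrow> bar x \<in> alphabet q"
  by (cases x) (auto simp: alphabet_def)

lemma rank_neq:
  "inj_on rk (alphabet q) \<Longrightarrow> x \<in> alphabet q \<Longrightarrow> y \<in> alphabet q \<Longrightarrow> x \<noteq> y \<Longrightarrow> rk x \<noteq> rk y"
  by (meson inj_onD)

definition cns :: "letter \<Rightarrow> (nat \<Rightarrow> letter) \<Rightarrow> nat \<Rightarrow> letter" where
  "cns c T n = (case n of 0 \<Rightarrow> c | Suc m \<Rightarrow> T m)"

lemma cns_0 [simp]: "cns c T 0 = c" and cns_Suc [simp]: "cns c T (Suc n) = T n"
  by (simp_all add: cns_def)

lemma cns_tail: "X 0 = c \<Longrightarrow> X = cns c (\<lambda>n. X (Suc n))"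
  by (rule ext) (simp add: cns_def split: nat.split)

definition agree_less :: "(letter \<Rightarrow> nat) \<Rightarrow> (nat \<Rightarrow> letter) \<Rightarrow> (nat \<Rightarrow> letter) \<Rightarrow> bool" where
  "agree_less rk T U \<longleftrightarrow>
     (\<exists>j. (\<forall>i\<le>j. T i = U i) \<and> cyc_prec rk (bar (T j)) (T (Suc j)) (U (Suc j)))"

lemma word_less_iff: "word_less rk T U \<longleftrightarrow> rk (T 0) < rk (U 0) \<or> agree_less rk T U"
  by (simp add: word_less_def agree_less_def)

lemma cyc_prec_irrefl: "\<not> cyc_prec rk x u u"
  by (auto simp: cyc_prec_def)

lemma agree_less_head: "agree_less rk T U \<Longrightarrow> T 0 = U 0"
  by (auto simp: agree_less_def)

lemma agree_less_cns:
  "agree_less rk (cns c T) (cns c U) \<longleftrightarrow> cyc_prec rk (bar c) (T 0) (U 0) \<or> agree_less rk T U"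
proof
  assume "agree_less rk (cns c T) (cns c U)"
  then obtain j where j: "\<forall>i\<le>j. cns c T i = cns c U i"
    "cyc_prec rk (bar (cns c T j)) (cns c T (Suc j)) (cns c U (Suc j))"
    unfolding agree_less_def by blast
  show "cyc_prec rk (bar c) (T 0) (U 0) \<or> agree_less rk T U"
  proof (cases j)
    case 0
    then show ?thesis using j by simp
  next
    case (Suc j')
    have "\<forall>i\<le>j'. T i = U i"
      using j(1) Suc by (metis Suc_le_mono cns_Suc)
    then show ?thesis unfolding agree_less_def using j(2) Suc by auto
  qed
next
  assume "cyc_prec rk (bar c) (T 0) (U 0) \<or> agree_less rk T U"
  then show "agree_less rk (cns c T) (cns c U)"
  proof
    assume "cyc_prec rk (bar c) (T 0) (U 0)"
    then show ?thesis unfolding agree_less_def by (intro exI[of _ 0]) simp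
  next
    assume "agree_less rk T U"
    then obtain j where j: "\<forall>i\<le>j. T i = U i" "cyc_prec rk (bar (T j)) (T (Suc j)) (U (Suc j))"
      unfolding agree_less_def by blast
    have "\<forall>i\<le>Suc j. cns c T i = cns c U i"
      using j(1) by (auto simp: cns_def split: nat.split)
    then show ?thesis unfolding agree_less_def using j(2) by (intro exI[of _ "Suc j"]) simp
  qed
qed

lemma agree_less_asym: "agree_less rk T U \<Longrightarrow> \<not> agree_less rk U T"
proof
  assume "agree_less rk T U" "agree_less rk U T"
  then obtain j k where j: "\<forall>i\<le>j. T i = U i" "cyc_prec rk (bar (T j)) (T (Suc j)) (U (Suc j))"
    and k: "\<forall>i\<le>k. U i = T i" "cyc_prec rk (bar (U k)) (U (Suc k)) (T (Suc k))"
    unfolding agree_less_def by blast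
  consider "j < k" | "j = k" | "k < j" by arith
  then show False
  proof cases
    case 1
    then show False using j(2) k(1) cyc_prec_irrefl by (metis Suc_leI)
  next
    case 2
    then show False using j k by (auto simp: cyc_prec_def)
  next
    case 3
    then show False using k(2) j(1) cyc_prec_irrefl by (metis Suc_leI)
  qed
qed

lemma word_less_asym: "word_less rk T U \<Longrightarrow> \<not> word_less rk U T"
  unfolding word_less_iff using agree_less_asym agree_less_head by (metis less_asym less_irrefl)

lemma word_less_distinct_heads: "T 0 \<noteq> U 0 \<Longrightarrow> word_less rk T U \<longleftrightarrow> rk (T 0) < rk (U 0)"
  unfolding word_less_iff using agree_less_head by blast

lemma word_less_cns_rotate:
  assumes inj: "inj_on rk (alphabet q)" and c: "bar c \<in> alphabet q"
    and T: "T 0 \<in> alphabet q" "T 0 \<noteq> bar c" and U: "U 0 \<in> alphabet q" "U 0 \<noteq> bar c"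
  shows "word_less rk (cns c T) (cns c U) \<longleftrightarrow>
     ((rk (bar c) < rk (T 0) \<longleftrightarrow> rk (bar c) < rk (U 0)) \<and> word_less rk T U) \<or>
     (rk (bar c) < rk (T 0) \<and> rk (U 0) < rk (bar c))"
proof -
  have kT: "rk (T 0) \<noteq> rk (bar c)" and kU: "rk (U 0) \<noteq> rk (bar c)"
    using rank_neq[OF inj] T U c by blast+
  have cons: "word_less rk (cns c T) (cns c U) \<longleftrightarrow> cyc_prec rk (bar c) (T 0) (U 0) \<or> agree_less rk T U"
    by (simp add: word_less_iff agree_less_cns)
  show ?thesis
  proof (cases "T 0 = U 0")
    case True
    then show ?thesis by (auto simp: word_less_iff agree_less_cns cyc_prec_irrefl)
  next
    case False
    have "rk (T 0) \<noteq> rk (U 0)" using rank_neq[OF inj T(1) U(1) False] .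
    then show ?thesis unfolding cons word_less_distinct_heads[of T U, OF False]
      using False agree_less_head kT kU by (auto simp: cyc_prec_def)
  qed
qed

definition cyc4 :: "('a \<Rightarrow> 'a \<Rightarrow> bool) \<Rightarrow> 'a \<Rightarrow> 'a \<Rightarrow> 'a \<Rightarrow> 'a \<Rightarrow> bool" where
  "cyc4 R a b c d \<longleftrightarrow> (R a b \<and> R b c \<and> R c d) \<or> (R b c \<and> R c d \<and> R d a) \<or>
     (R c d \<and> R d a \<and> R a b) \<or> (R d a \<and> R a b \<and> R b c)"

lemma cyc_ordered_cyc4: "cyc_ordered rk = cyc4 (word_less rk)"
  by (intro ext) (simp add: cyc_ordered_def cyc4_def)

lemma cyc4_cut_rotation:
  assumes S: "a \<in> S" "b \<in> S" "c \<in> S" "d \<in> S"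
    and asym: "\<And>x y. x \<in> S \<Longrightarrow> y \<in> S \<Longrightarrow> R x y \<Longrightarrow> \<not> R y x"
    and cut: "\<And>x y. x \<in> S \<Longrightarrow> y \<in> S \<Longrightarrow> C x \<Longrightarrow> \<not> C y \<Longrightarrow> R x y"
    and rot: "\<And>x y. x \<in> S \<Longrightarrow> y \<in> S \<Longrightarrow>
      R' x y \<longleftrightarrow> ((C x \<longleftrightarrow> C y) \<and> R x y) \<or> (\<not> C x \<and> C y)"
  shows "cyc4 R' a b c d \<longleftrightarrow> cyc4 R a b c d"
  unfolding cyc4_def
  using rot[OF S(1) S(2)] rot[OF S(2) S(3)] rot[OF S(3) S(4)] rot[OF S(4) S(1)]
    cut[OF S(1) S(2)] cut[OF S(2) S(3)] cut[OF S(3) S(4)] cut[OF S(4) S(1)]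
    cut[OF S(2) S(1)] cut[OF S(3) S(2)] cut[OF S(4) S(3)] cut[OF S(1) S(4)]
    asym[OF S(1) S(2)] asym[OF S(2) S(3)] asym[OF S(3) S(4)] asym[OF S(4) S(1)]
  by argo

definition reduced_word :: "nat \<Rightarrow> (nat \<Rightarrow> letter) \<Rightarrow> bool" where
  "reduced_word q X \<longleftrightarrow> (\<forall>n. X n \<in> alphabet q) \<and> (\<forall>n. X (Suc n) \<noteq> bar (X n))"

text \<open>Left multiplication by bar a, followed by free reduction.\<close>
definition translate :: "letter \<Rightarrow> (nat \<Rightarrow> letter) \<Rightarrow> nat \<Rightarrow> letter" where
  "translate a X = (if X 0 = a then (\<lambda>n. X (Suc n)) else cns (bar a) X)"

text \<open>X lies before the cut at a: its first letter ranks below a, or it is a followed by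
  a letter ranking above bar a.  These are the words that translate a moves behind all others.\<close>
definition before_cut :: "(letter \<Rightarrow> nat) \<Rightarrow> letter \<Rightarrow> (nat \<Rightarrow> letter) \<Rightarrow> bool" where
  "before_cut rk a X \<longleftrightarrow> rk (X 0) < rk a \<or> (X 0 = a \<and> rk (bar a) < rk (X 1))"

lemma reduced_wordD:
  assumes "reduced_word q X"
  shows "X 0 \<in> alphabet q" "X 1 \<in> alphabet q" "X 1 \<noteq> bar (X 0)"
  using assms unfolding reduced_word_def by (metis One_nat_def)+

lemma translate_less_both:
  assumes inj: "inj_on rk (alphabet q)" and a: "a \<in> alphabet q"
    and X: "reduced_word q X" "X 0 = a" and Y: "reduced_word q Y" "Y 0 = a"
  shows "word_less rk (translate a X) (translate a Y) \<longleftrightarrow>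
     ((before_cut rk a X \<longleftrightarrow> before_cut rk a Y) \<and> word_less rk X Y) \<or>
     (\<not> before_cut rk a X \<and> before_cut rk a Y)"
proof -
  define X' Y' where "X' = (\<lambda>n. X (Suc n))" and "Y' = (\<lambda>n. Y (Suc n))"
  have ba: "bar a \<in> alphabet q" using a bar_in_alphabet by blast
  have X'0: "X' 0 \<in> alphabet q" "X' 0 \<noteq> bar a" and Y'0: "Y' 0 \<in> alphabet q" "Y' 0 \<noteq> bar a"
    using reduced_wordD[OF X(1)] reduced_wordD[OF Y(1)] X(2) Y(2) by (simp_all add: X'_def Y'_def)
  have kX: "rk (X' 0) \<noteq> rk (bar a)" and kY: "rk (Y' 0) \<noteq> rk (bar a)"
    using rank_neq[OF inj] X'0 Y'0 ba by blast+
  have "word_less rk X Y = word_less rk (cns a X') (cns a Y')"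
    using cns_tail X(2) Y(2) X'_def Y'_def by metis
  also have "\<dots> \<longleftrightarrow> ((rk (bar a) < rk (X' 0) \<longleftrightarrow> rk (bar a) < rk (Y' 0)) \<and> word_less rk X' Y') \<or>
     (rk (bar a) < rk (X' 0) \<and> rk (Y' 0) < rk (bar a))"
    using word_less_cns_rotate[of rk q a X' Y', OF inj ba X'0 Y'0] by simp
  finally have rotated: "word_less rk X Y \<longleftrightarrow> \<dots>" .
  have sX: "translate a X = X'" and sY: "translate a Y = Y'"
    using X Y by (simp_all add: translate_def X'_def Y'_def)
  have cX: "before_cut rk a X \<longleftrightarrow> rk (bar a) < rk (X' 0)"
    and cY: "before_cut rk a Y \<longleftrightarrow> rk (bar a) < rk (Y' 0)"
    using X Y by (simp_all add: before_cut_def X'_def Y'_def)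
  show ?thesis
  proof (cases "X' 0 = Y' 0")
    case True
    then show ?thesis unfolding sX sY cX cY rotated by auto
  next
    case False
    then show ?thesis unfolding sX sY cX cY rotated word_less_distinct_heads[of X' Y', OF False]
      using kX kY by auto
  qed
qed

lemma translate_less_neither:
  assumes inj: "inj_on rk (alphabet q)" and a: "a \<in> alphabet q"
    and X: "reduced_word q X" "X 0 \<noteq> a" and Y: "reduced_word q Y" "Y 0 \<noteq> a"
  shows "word_less rk (translate a X) (translate a Y) \<longleftrightarrow>
     ((before_cut rk a X \<longleftrightarrow> before_cut rk a Y) \<and> word_less rk X Y) \<or>
     (\<not> before_cut rk a X \<and> before_cut rk a Y)"
proof -
  have kX: "rk (X 0) \<noteq> rk a" and kY: "rk (Y 0) \<noteq> rk a"
    using rank_neq[OF inj] reduced_wordD(1) X Y a by blast+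
  have "word_less rk (translate a X) (translate a Y) \<longleftrightarrow>
     ((rk a < rk (X 0) \<longleftrightarrow> rk a < rk (Y 0)) \<and> word_less rk X Y) \<or>
     (rk a < rk (X 0) \<and> rk (Y 0) < rk a)"
    using word_less_cns_rotate[OF inj, of "bar a" X Y] reduced_wordD X Y a
    by (simp add: translate_def)
  moreover have "before_cut rk a X \<longleftrightarrow> rk (X 0) < rk a" "before_cut rk a Y \<longleftrightarrow> rk (Y 0) < rk a"
    using X Y by (simp_all add: before_cut_def)
  ultimately show ?thesis using kX kY by auto
qed

lemma translate_less_mixed:
  assumes inj: "inj_on rk (alphabet q)" and a: "a \<in> alphabet q"
    and X: "reduced_word q X" "X 0 = a" and Y: "reduced_word q Y" "Y 0 \<noteq> a"
  shows "word_less rk (translate a X) (translate a Y) \<longleftrightarrow> \<not> before_cut rk a X"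
    and "word_less rk (translate a Y) (translate a X) \<longleftrightarrow> before_cut rk a X"
    and "word_less rk X Y \<longleftrightarrow> \<not> before_cut rk a Y"
    and "word_less rk Y X \<longleftrightarrow> before_cut rk a Y"
proof -
  have ba: "bar a \<in> alphabet q" using a bar_in_alphabet by blast
  have nX: "X 1 \<noteq> bar a" using reduced_wordD(3)[OF X(1)] X(2) by simp
  have kX: "rk (X 1) \<noteq> rk (bar a)" using rank_neq[OF inj] reduced_wordD(2) X(1) ba nX by blast
  have kY: "rk (Y 0) \<noteq> rk a" using rank_neq[OF inj] reduced_wordD(1) Y a by blast
  have sX: "translate a X 0 = X 1" and sY: "translate a Y 0 = bar a" using X Y by (simp_all add: translate_def)
  have cX: "before_cut rk a X \<longleftrightarrow> rk (bar a) < rk (X 1)"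
    and cY: "before_cut rk a Y \<longleftrightarrow> rk (Y 0) < rk a" using X Y by (simp_all add: before_cut_def)
  show "word_less rk (translate a X) (translate a Y) \<longleftrightarrow> \<not> before_cut rk a X"
    "word_less rk (translate a Y) (translate a X) \<longleftrightarrow> before_cut rk a X"
    using word_less_distinct_heads[of "translate a X" "translate a Y"]
      word_less_distinct_heads[of "translate a Y" "translate a X"] sX sY nX kX cX by auto
  show "word_less rk X Y \<longleftrightarrow> \<not> before_cut rk a Y" "word_less rk Y X \<longleftrightarrow> before_cut rk a Y"
    using word_less_distinct_heads[of X Y] word_less_distinct_heads[of Y X] X Y kY cY by auto
qed

lemma translate_less:
  assumes inj: "inj_on rk (alphabet q)" and a: "a \<in> alphabet q"
    and X: "reduced_word q X" and Y: "reduced_word q Y"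
  shows "word_less rk (translate a X) (translate a Y) \<longleftrightarrow>
     ((before_cut rk a X \<longleftrightarrow> before_cut rk a Y) \<and> word_less rk X Y) \<or>
     (\<not> before_cut rk a X \<and> before_cut rk a Y)"
proof (cases "X 0 = a"; cases "Y 0 = a")
  assume "X 0 = a" "Y 0 = a"
  then show ?thesis using translate_less_both[OF inj a X _ Y] by blast
next
  assume "X 0 = a" "Y 0 \<noteq> a"
  then show ?thesis using translate_less_mixed[OF inj a X _ Y] by blast
next
  assume "X 0 \<noteq> a" "Y 0 = a"
  then show ?thesis using translate_less_mixed[OF inj a Y _ X] by blast
next
  assume "X 0 \<noteq> a" "Y 0 \<noteq> a"
  then show ?thesis using translate_less_neither[OF inj a X _ Y] by blast
qed

lemma before_cut_less:
  assumes inj: "inj_on rk (alphabet q)" and a: "a \<in> alphabet q"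
    and X: "reduced_word q X" "before_cut rk a X"
    and Y: "reduced_word q Y" "\<not> before_cut rk a Y"
  shows "word_less rk X Y"
proof (cases "X 0 = a"; cases "Y 0 = a")
  assume xa: "X 0 = a" and ya: "Y 0 = a"
  have ba: "bar a \<in> alphabet q" using a bar_in_alphabet by blast
  have "rk (Y 1) \<noteq> rk (bar a)"
    using rank_neq[OF inj] reduced_wordD Y(1) ba ya by metis
  then have "cyc_prec rk (bar (X 0)) (X (Suc 0)) (Y (Suc 0))"
    using X(2) Y(2) xa ya by (auto simp: before_cut_def cyc_prec_def)
  then have "agree_less rk X Y" unfolding agree_less_def using xa ya
    by (intro exI[of _ 0]) simp
  then show ?thesis by (simp add: word_less_iff)
next
  assume "X 0 = a" "Y 0 \<noteq> a"
  then show ?thesis using translate_less_mixed(3)[OF inj a X(1) _ Y(1)] Y(2) by blast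
next
  assume "X 0 \<noteq> a" "Y 0 = a"
  then show ?thesis using translate_less_mixed(4)[OF inj a Y(1) _ X(1)] X(2) by blast
next
  assume "X 0 \<noteq> a" "Y 0 \<noteq> a"
  then show ?thesis using X(2) Y(2) by (auto simp: before_cut_def word_less_iff)
qed

lemma cyc_ordered_translate:
  assumes inj: "inj_on rk (alphabet q)" and a: "a \<in> alphabet q"
    and red: "reduced_word q P" "reduced_word q Q" "reduced_word q N" "reduced_word q M"
  shows "cyc_ordered rk (translate a P) (translate a Q) (translate a N) (translate a M) \<longleftrightarrow> cyc_ordered rk P Q N M"
proof -
  have "cyc4 (\<lambda>X Y. word_less rk (translate a X) (translate a Y)) P Q N M \<longleftrightarrow> cyc4 (word_less rk) P Q N M"
  proof (rule cyc4_cut_rotation[where S = "{X. reduced_word q X}" and C = "before_cut rk a"])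
    show "P \<in> {X. reduced_word q X}" "Q \<in> {X. reduced_word q X}"
      "N \<in> {X. reduced_word q X}" "M \<in> {X. reduced_word q X}" using red by simp_all
  qed (use word_less_asym before_cut_less[OF inj a] translate_less[OF inj a] in auto)
  then show ?thesis by (simp add: cyc_ordered_cyc4 cyc4_def)
qed

definition sign4 :: "(letter \<Rightarrow> nat) \<Rightarrow> (nat \<Rightarrow> letter) \<Rightarrow> (nat \<Rightarrow> letter) \<Rightarrow>
    (nat \<Rightarrow> letter) \<Rightarrow> (nat \<Rightarrow> letter) \<Rightarrow> int" where
  "sign4 rk P Q N M =
     (if cyc_ordered rk P Q N M then 1 else if cyc_ordered rk P M N Q then -1 else 0)"

lemma sfun_sign4: "sfun rk V W i j = sign4 rk (pinf V i) (pinf W j) (ninf V i) (ninf W j)"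
  by (simp add: sfun_def sign4_def)

lemma sign4_translate:
  assumes inj: "inj_on rk (alphabet q)" and a: "a \<in> alphabet q"
    and red: "reduced_word q P" "reduced_word q Q" "reduced_word q N" "reduced_word q M"
  shows "sign4 rk (translate a P) (translate a Q) (translate a N) (translate a M) = sign4 rk P Q N M"
  using cyc_ordered_translate[OF inj a red] cyc_ordered_translate[OF inj a red(1,4,3,2)]
  by (simp add: sign4_def)

lemma cyc_reduced_Suc:
  assumes "cyc_reduced V" "V \<noteq> []"
  shows "V ! (i mod length V) \<noteq> bar (V ! (Suc i mod length V))"
proof -
  have "i mod length V < length V" using assms(2) by simp
  then have "V ! (i mod length V) \<noteq> bar (V ! ((i mod length V + 1) mod length V))"
    using assms(1) unfolding cyc_reduced_def by blast
  then show ?thesis by (simp add: mod_Suc_eq)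
qed

lemma int_mod_Suc:
  assumes "(n::nat) > 0"
  shows "Suc (nat ((int i - 1 - int k) mod int n)) mod n = nat ((int i - int k) mod int n)"
proof -
  let ?m = "(int i - 1 - int k) mod int n"
  have "?m \<ge> 0" using assms by simp
  then have "int (Suc (nat ?m) mod n) = (?m + 1) mod int n" by (simp add: of_nat_mod add.commute)
  also have "\<dots> = (int i - int k) mod int n" by (simp add: mod_add_left_eq)
  finally show ?thesis by (metis nat_int)
qed

lemma pinf_mod: "V \<noteq> [] \<Longrightarrow> pinf V (i mod length V) = pinf V i"
  by (rule ext) (simp add: pinf_def mod_add_left_eq)

lemma ninf_mod: "ninf V (i mod length V) = ninf V i"
proof (rule ext)
  fix k
  have "(int (i mod length V) - 1 - int k) mod int (length V) = (int i - 1 - int k) mod int (length V)"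
    using mod_diff_left_eq[of "int i" "int (length V)" "1 + int k"]
    by (simp add: of_nat_mod algebra_simps)
  then show "ninf V (i mod length V) k = ninf V i k" by (simp add: ninf_def)
qed

lemma sfun_mod:
  "V \<noteq> [] \<Longrightarrow> sfun rk V W (i mod length V) j = sfun rk V W i j"
  "W \<noteq> [] \<Longrightarrow> sfun rk V W i (j mod length W) = sfun rk V W i j"
  by (simp_all add: sfun_def pinf_mod ninf_mod)

lemma pinf_cns: "pinf V i = cns (V ! (i mod length V)) (pinf V (Suc i))"
  by (rule ext) (simp add: pinf_def cns_def split: nat.split)

lemma ninf_Suc: "V \<noteq> [] \<Longrightarrow> ninf V (Suc i) = cns (bar (V ! (i mod length V))) (ninf V i)"
  by (rule ext) (simp add: ninf_def cns_def nat_mod_as_int algebra_simps split: nat.split)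

lemma ninf_head_neq:
  assumes "cyc_reduced V" "V \<noteq> []"
  shows "ninf V i 0 \<noteq> V ! (i mod length V)"
proof -
  let ?m = "nat ((int i - 1) mod int (length V))"
  have "?m < length V" using assms(2) by (simp add: nat_less_iff)
  moreover have "Suc ?m mod length V = i mod length V"
    using int_mod_Suc[of "length V" i 0] assms(2) by (simp add: nat_mod_as_int)
  ultimately have "V ! ?m \<noteq> bar (V ! (i mod length V))"
    using cyc_reduced_Suc[OF assms, of ?m] by simp
  then show ?thesis by (simp add: ninf_def bar_eq_iff)
qed

lemma reduced_pinf:
  assumes "cyc_reduced V" "V \<noteq> []" "set V \<subseteq> alphabet q"
  shows "reduced_word q (pinf V i)"
  unfolding reduced_word_def
proof (intro conjI allI)
  fix k
  show "pinf V i k \<in> alphabet q" using assms(2,3) by (auto simp: pinf_def)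
  show "pinf V i (Suc k) \<noteq> bar (pinf V i k)"
    using cyc_reduced_Suc[OF assms(1,2), of "i + k"] by (auto simp: pinf_def bar_eq_iff)
qed

lemma reduced_ninf:
  assumes "cyc_reduced V" "V \<noteq> []" "set V \<subseteq> alphabet q"
  shows "reduced_word q (ninf V i)"
  unfolding reduced_word_def
proof (intro conjI allI)
  fix k
  have "nat ((int i - 1 - int k) mod int (length V)) < length V"
    using assms(2) by (simp add: nat_less_iff)
  then have "V ! nat ((int i - 1 - int k) mod int (length V)) \<in> alphabet q"
    using assms(3) by auto
  then show "ninf V i k \<in> alphabet q" using bar_in_alphabet by (simp add: ninf_def)
  let ?m = "nat ((int i - 1 - int (Suc k)) mod int (length V))"
  have "?m < length V" using assms(2) by (simp add: nat_less_iff)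
  moreover have "Suc ?m mod length V = nat ((int i - 1 - int k) mod int (length V))"
    using int_mod_Suc[of "length V" i "Suc k"] assms(2) by (simp add: algebra_simps)
  ultimately have "V ! ?m \<noteq> bar (V ! nat ((int i - 1 - int k) mod int (length V)))"
    using cyc_reduced_Suc[OF assms(1,2), of ?m] by simp
  then show "ninf V i (Suc k) \<noteq> bar (ninf V i k)" by (simp add: ninf_def bar_eq_iff)
qed

lemma translate_forward:
  assumes "cyc_reduced V" "V \<noteq> []" "a = V ! (i mod length V)"
  shows "translate a (pinf V i) = pinf V (Suc i)" and "translate a (ninf V i) = ninf V (Suc i)"
  using assms ninf_head_neq[OF assms(1,2), of i] ninf_Suc[OF assms(2), of i] pinf_cns[of V i]
  by (simp_all add: translate_def)

lemma translate_backward: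
  assumes "cyc_reduced V" "V \<noteq> []" "a = bar (V ! (i mod length V))"
  shows "translate a (pinf V (Suc i)) = pinf V i" and "translate a (ninf V (Suc i)) = ninf V i"
proof -
  have "pinf V (Suc i) 0 \<noteq> a"
    using cyc_reduced_Suc[OF assms(1,2), of i] assms(3) by (simp add: pinf_def) (metis bar_bar)
  then show "translate a (pinf V (Suc i)) = pinf V i"
    using pinf_cns[of V i] assms(3) by (simp add: translate_def)
  show "translate a (ninf V (Suc i)) = ninf V i"
    using ninf_Suc[OF assms(2), of i] assms(3) by (simp add: translate_def)
qed

context
  fixes q :: nat and rk :: "letter \<Rightarrow> nat" and V W :: "letter list"
  assumes inj: "inj_on rk (alphabet q)"
    and V: "V \<noteq> []" "set V \<subseteq> alphabet q" "cyc_reduced V"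
    and W: "W \<noteq> []" "set W \<subseteq> alphabet q" "cyc_reduced W"
begin

lemma sfun_translate:
  assumes "a \<in> alphabet q"
  shows "sfun rk V W i j = sign4 rk (translate a (pinf V i)) (translate a (pinf W j))
     (translate a (ninf V i)) (translate a (ninf W j))"
  unfolding sfun_sign4
  using sign4_translate[OF inj assms] reduced_pinf[OF V(3,1,2)] reduced_pinf[OF W(3,1,2)]
    reduced_ninf[OF V(3,1,2)] reduced_ninf[OF W(3,1,2)]
  by presburger

text \<open>Generator (j,k) ~ (j+1,k+1) for V j = W k: translate by V j.\<close>
lemma sfun_diagonal_step:
  assumes "j < length V" "k < length W" "V ! j = W ! k"
  shows "sfun rk V W j k = sfun rk V W (Suc j) (Suc k)"
proof -
  have "V ! j \<in> alphabet q" using assms(1) V(2) by auto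
  then show ?thesis
    using sfun_translate[of "V ! j" j k] assms
      translate_forward[OF V(3,1), of "V ! j" j] translate_forward[OF W(3,1), of "V ! j" k]
    by (simp add: sfun_sign4)
qed

text \<open>Generator (j+1,k) ~ (j,k+1) for V j = bar (W k): translate by W k,
  which moves the ends of V backward and those of W forward.\<close>
lemma sfun_antidiagonal_step:
  assumes "j < length V" "k < length W" "V ! j = bar (W ! k)"
  shows "sfun rk V W (Suc j) k = sfun rk V W j (Suc k)"
proof -
  have "W ! k \<in> alphabet q" using assms(2) W(2) by auto
  then show ?thesis
    using sfun_translate[of "W ! k" "Suc j" k] assms
      translate_backward[OF V(3,1), of "W ! k" j] translate_forward[OF W(3,1), of "W ! k" k]
    by (simp add: sfun_sign4)
qed

lemma sfun_generator_step:
  assumes "(p, p') \<in> Rgen V W"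
  shows "sfun rk V W (fst p) (snd p) = sfun rk V W (fst p') (snd p')"
  using assms sfun_diagonal_step sfun_antidiagonal_step
  unfolding Rgen_def by (auto simp: sfun_mod V(1) W(1))

end

theorem lemma2p7:
  fixes q :: nat and rk :: "letter \<Rightarrow> nat" and V W :: "letter list"
  assumes "inj_on rk (alphabet q)"
    and "V \<noteq> []" and "W \<noteq> []"
    and "set V \<subseteq> alphabet q" and "set W \<subseteq> alphabet q"
    and "cyc_reduced V" and "cyc_reduced W"
  shows "\<forall>j k j' k'. ((j, k), (j', k')) \<in> Rrel V W \<longrightarrow> sfun rk V W j k = sfun rk V W j' k'"
proof (intro allI impI)
  fix j k j' k'
  let ?s = "\<lambda>p. sfun rk V W (fst p) (snd p)"
  assume "((j, k), (j', k')) \<in> Rrel V W"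
  then have "((j, k), (j', k')) \<in> (Rgen V W \<union> (Rgen V W)\<inverse>)\<^sup>*"
    unfolding Rrel_def by blast
  then have "?s (j, k) = ?s (j', k')"
  proof (induction rule: rtrancl_induct)
    case (step y z)
    then show ?case
      using sfun_generator_step[OF assms(1,2,4,6,3,5,7)] by (metis Un_iff converse_iff)
  qed simp
  then show "sfun rk V W j k = sfun rk V W j' k'" by simp
qed

end
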